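(* Let $h_1,h_2$ be odd (Grassmann) parameters with $h_1^2=h_2^2=0$ and $h_1h_2=-h_2h_1$. Let $\mathcal{A}_{h_1,h_2}$ be the associative superalgebra generated by even elements $a,d$ and odd elements $\beta,\gamma$, where $h_1,h_2$ commute with $a,d$ and anticommute with $\beta,\gamma$, subject to the relations $$a \beta = \beta a - h_2 (a^2 - \beta \gamma - ad), \quad d \beta = \beta d + h_2 (d^2 + \beta \gamma - da),$$ $$a \gamma = \gamma a + h_1 (a^2 + \gamma \beta - ad), \quad d \gamma = \gamma d - h_1 (d^2 - \gamma \beta - da),$$ $$\beta^2 = h_2 \beta (a - d), \quad \gamma^2 = h_1 \gamma (d - a),\quad \beta \gamma = - \gamma \beta + (h_1 \beta - h_2 \gamma)(d - a),$$ $$ad = da + (h_1 \beta + h_2 \gamma)(a - d) - h_1 h_2 (a^2 - 2 da + d^2),$$ and with formal inverses $a^{-1}$, $d^{-1}$ of $a$ and $d$ adjoined. Define the quantum superdeterminant $D_{h_1,h_2} = ad^{-1} - \beta d^{-1}\gamma d^{-1}$. Then $D_{h_1,h_2} = d^{-1}a - d^{-1}\beta d^{-1}\gamma$, and $D_{h_1,h_2}$ commutes with each of $a,\beta,\gamma,d$ (i.e. it is central in the algebra generated by the matrix entries of $T=\begin{pmatrix} a & \beta\\ \gamma & d\end{pmatrix}$).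
   Context: This algebra is the $(h_1,h_2)$-deformation of the algebra of coordinate functions on the supergroup GL$(1|1)$, denoted GL$_{h_1,h_2}(1|1)$; the generators $a,d$ are even and $\beta,\gamma$ are odd. *)

theory Defs
  imports Complex_Main
begin

definition qsdet :: "'a::ring_1 \<Rightarrow> 'a \<Rightarrow> 'a \<Rightarrow> 'a \<Rightarrow> 'a" where
  "qsdet a b c di = a * di - b * di * c * di"

end

(* Conjugating the relations for d beta, d gamma and a d by d^-1 yields commutation rules
   for d^-1 with beta, gamma and a.  Together with the defining relations they form a
   rewrite system moving h1, h2 to the left, then gamma, beta, then d^-1 and d, then a;
   it terminates because every correction term carries an extra factor h1 or h2, and
   h1, h2 are nilpotent.  Both sides of each identity reduce to the same normal form.
   Commutation with d needs no computation: the two expressions for the superdeterminant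
   give D d = a - beta d^-1 gamma = d D. *)
theory Submission
  imports Defs
begin

lemma mult_left_extend:
  fixes x y r :: "'a::semigroup_mult"
  shows "x * y = r \<Longrightarrow> z * x * y = z * r"
  by (simp add: mult.assoc)

lemma commute_right_inverse:
  fixes x xi y :: "'a::monoid_mult"
  assumes "x * y = y * x" "x * xi = 1" "xi * x = 1"
  shows "xi * y = y * xi"
proof -
  have "xi * y = xi * (y * x) * xi" using assms(2) by (simp add: mult.assoc)
  also have "\<dots> = (xi * x) * y * xi" using assms(1) by (simp add: mult.assoc)
  finally show ?thesis using assms(3) by simp
qed

locale gl_h1h2_11 =
  fixes h1 h2 a b c d di :: "'r::ring_1"
  assumes h1_sq: "h1 * h1 = 0" and h2_sq: "h2 * h2 = 0" and h1_h2: "h1 * h2 = - (h2 * h1)"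
    and h1_a: "h1 * a = a * h1" and h1_d: "h1 * d = d * h1"
    and h2_a: "h2 * a = a * h2" and h2_d: "h2 * d = d * h2"
    and h1_b: "h1 * b = - (b * h1)" and h1_c: "h1 * c = - (c * h1)"
    and h2_b: "h2 * b = - (b * h2)" and h2_c: "h2 * c = - (c * h2)"
    and a_b: "a * b = b * a - h2 * (a * a - b * c - a * d)"
    and d_b: "d * b = b * d + h2 * (d * d + b * c - d * a)"
    and a_c: "a * c = c * a + h1 * (a * a + c * b - a * d)"
    and d_c: "d * c = c * d - h1 * (d * d - c * b - d * a)"
    and b_b: "b * b = h2 * b * (a - d)"
    and c_c: "c * c = h1 * c * (d - a)"
    and b_c: "b * c = - (c * b) + (h1 * b - h2 * c) * (d - a)"
    and a_d: "a * d = d * a + (h1 * b + h2 * c) * (a - d)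
                     - h1 * h2 * (a * a - 2 * (d * a) + d * d)"
    and d_di: "d * di = 1" and di_d: "di * d = 1"
begin

lemma h2_h1: "h2 * h1 = - (h1 * h2)"
  using h1_h2 by (simp add: minus_equation_iff)

lemma b_h1: "b * h1 = - (h1 * b)" and c_h1: "c * h1 = - (h1 * c)"
  and b_h2: "b * h2 = - (h2 * b)" and c_h2: "c * h2 = - (h2 * c)"
  using h1_b h1_c h2_b h2_c by (simp_all add: minus_equation_iff)

lemma di_h1: "di * h1 = h1 * di"
  by (rule commute_right_inverse[OF h1_d[symmetric] d_di di_d])

lemma di_h2: "di * h2 = h2 * di"
  by (rule commute_right_inverse[OF h2_d[symmetric] d_di di_d])

lemma di_mult_conj: "di * x = di * (x * d) * di"
  using d_di by (simp add: mult.assoc)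

lemma di_b_implicit: "di * b = b * di - h2 * (1 + di * b * c * di - a * di)"
proof -
  have "b * d = d * b - h2 * (d * d + b * c - d * a)"
    using d_b by (simp add: algebra_simps)
  then have "di * b = di * (d * b - h2 * (d * d + b * c - d * a)) * di"
    using di_mult_conj by metis
  then show ?thesis
    by (simp add: algebra_simps d_di di_d di_h2 mult_left_extend[OF d_di]
        mult_left_extend[OF di_d] mult_left_extend[OF di_h2]
        del: mult.assoc add: mult.assoc[symmetric])
qed

lemma h2_di_b: "h2 * di * b = h2 * b * di"
  by (subst mult.assoc, subst di_b_implicit)
    (simp add: algebra_simps h2_sq mult_left_extend[OF h2_sq]
      del: mult.assoc add: mult.assoc[symmetric])

lemma di_b: "di * b = b * di - h2 + h2 * a * di - h2 * b * di * c * di"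
  by (subst di_b_implicit)
    (simp add: algebra_simps h2_sq h2_di_b mult_left_extend[OF h2_sq] mult_left_extend[OF h2_di_b]
      del: mult.assoc add: mult.assoc[symmetric])

lemma di_c_implicit: "di * c = c * di + h1 * (1 - di * c * b * di - a * di)"
proof -
  have "c * d = d * c + h1 * (d * d - c * b - d * a)"
    using d_c by (simp add: algebra_simps)
  then have "di * c = di * (d * c + h1 * (d * d - c * b - d * a)) * di"
    using di_mult_conj by metis
  then show ?thesis
    by (simp add: algebra_simps d_di di_d di_h1 mult_left_extend[OF d_di]
        mult_left_extend[OF di_d] mult_left_extend[OF di_h1]
        del: mult.assoc add: mult.assoc[symmetric])
qed

lemma h1_di_c: "h1 * di * c = h1 * c * di"
  by (subst mult.assoc, subst di_c_implicit)
    (simp add: algebra_simps h1_sq mult_left_extend[OF h1_sq]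
      del: mult.assoc add: mult.assoc[symmetric])

lemma di_c: "di * c = c * di + h1 - h1 * a * di - h1 * c * di * b * di"
  by (subst di_c_implicit)
    (simp add: algebra_simps h1_sq h1_di_c mult_left_extend[OF h1_sq] mult_left_extend[OF h1_di_c]
      del: mult.assoc add: mult.assoc[symmetric])

lemma a_di: "a * di = di * a - di * ((h1 * b + h2 * c) * (a - d)
                     - h1 * h2 * (a * a - 2 * (d * a) + d * d)) * di"
proof -
  have "a * di = di * (d * a) * di"
    using di_d by (simp flip: mult.assoc)
  also have "\<dots> = di * (a * d - ((h1 * b + h2 * c) * (a - d)
                     - h1 * h2 * (a * a - 2 * (d * a) + d * d))) * di"
    using a_d by (simp add: algebra_simps)
  finally show ?thesis
    using d_di by (simp add: algebra_simps mult.assoc)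
qed

lemmas normal_order = h1_sq h2_sq h2_h1 h1_a[symmetric] h1_d[symmetric]
  h2_a[symmetric] h2_d[symmetric] di_h1 di_h2 b_h1 c_h1 b_h2 c_h2
  a_b d_b a_c d_c b_b c_c b_c a_d d_di di_d di_b di_c a_di

(* The rules must act inside left-nested monomials z * x * y, and their right-hand sides
   must already be distributed over z: otherwise the right-hand side of a_di, which
   contains a * di again, is simplified before the nilpotent prefix z reaches it, and
   the rewriting loops. *)
lemmas normal_order_left = normal_order[THEN mult_left_extend,
  simplified ring_distribs mult_minus_right mult_1_right mult_zero_right mult_2
    mult.assoc[symmetric]]

lemmas normal_order_rules = normal_order_left normal_order_left[of 1, simplified mult_1_left]

lemma qsdet_conv_left: "qsdet a b c di = di * a - di * b * di * c"
  unfolding qsdet_def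
  by (simp add: algebra_simps normal_order_rules del: mult.assoc add: mult.assoc[symmetric])

lemma qsdet_commute_a: "qsdet a b c di * a = a * qsdet a b c di"
  unfolding qsdet_def
  by (simp add: algebra_simps normal_order_rules del: mult.assoc add: mult.assoc[symmetric])

lemma qsdet_commute_b: "qsdet a b c di * b = b * qsdet a b c di"
  unfolding qsdet_def
  by (simp add: algebra_simps normal_order_rules del: mult.assoc add: mult.assoc[symmetric])

lemma qsdet_commute_c: "qsdet a b c di * c = c * qsdet a b c di"
  unfolding qsdet_def
  by (simp add: algebra_simps normal_order_rules del: mult.assoc add: mult.assoc[symmetric])

lemma qsdet_commute_d: "qsdet a b c di * d = d * qsdet a b c di"
proof -
  have "qsdet a b c di * d = a - b * di * c"
    unfolding qsdet_def using di_d by (simp add: algebra_simps)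
  also have "\<dots> = d * qsdet a b c di"
    unfolding qsdet_conv_left using d_di by (simp add: algebra_simps flip: mult.assoc)
  finally show ?thesis .
qed

end

theorem mainTheorem1:
  fixes h1 h2 a d b c ai di :: "'r::real_algebra_1"
  assumes grass: "h1 * h1 = 0" "h2 * h2 = 0" "h1 * h2 = - (h2 * h1)"
    and hcomm: "h1 * a = a * h1" "h1 * d = d * h1" "h2 * a = a * h2" "h2 * d = d * h2"
    and hanti: "h1 * b = - (b * h1)" "h1 * c = - (c * h1)"
               "h2 * b = - (b * h2)" "h2 * c = - (c * h2)"
    and r1: "a * b = b * a - h2 * (a * a - b * c - a * d)"
    and r2: "d * b = b * d + h2 * (d * d + b * c - d * a)"
    and r3: "a * c = c * a + h1 * (a * a + c * b - a * d)"
    and r4: "d * c = c * d - h1 * (d * d - c * b - d * a)"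
    and r5: "b * b = h2 * b * (a - d)"
    and r6: "c * c = h1 * c * (d - a)"
    and r7: "b * c = - (c * b) + (h1 * b - h2 * c) * (d - a)"
    and r8: "a * d = d * a + (h1 * b + h2 * c) * (a - d)
                     - h1 * h2 * (a * a - 2 * (d * a) + d * d)"
    and inva: "a * ai = 1" "ai * a = 1"
    and invd: "d * di = 1" "di * d = 1"
  shows "qsdet a b c di = di * a - di * b * di * c
       \<and> qsdet a b c di * a = a * qsdet a b c di
       \<and> qsdet a b c di * b = b * qsdet a b c di
       \<and> qsdet a b c di * c = c * qsdet a b c di
       \<and> qsdet a b c di * d = d * qsdet a b c di"
proof -
  interpret gl_h1h2_11 h1 h2 a b c d di
    using grass hcomm hanti r1 r2 r3 r4 r5 r6 r7 r8 invd by unfold_locales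
  show ?thesis
    using qsdet_conv_left qsdet_commute_a qsdet_commute_b qsdet_commute_c qsdet_commute_d
    by blast
qed

end
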